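(* Let $T=1$ and let $\mathcal I$ be a random variable with $\mathbb P(\mathcal I=1)=\mathbb P(\mathcal I=2)=\tfrac12$. Let $\mathcal F_t=\mathcal F^1_t$ be the $\sigma$-algebra generated by $\mathcal I$ and the $\mathbb P$-null sets for all $t\in[0,1]$, and let $\mathcal F^2_t$ be the trivial $\sigma$-algebra augmented by $\mathbb P$-null sets for all $t\in[0,1]$. Consider the payoff $$\mathcal P(\tau,\sigma)=f_\tau1_{\{\tau<\sigma\}}+g_\sigma1_{\{\sigma<\tau\}}+h_\tau1_{\{\tau=\sigma\}}$$ with $f_t\equiv1$, $g_t=\tfrac12t$, $h_t=1$ for $t<1$, and $h_1=2$ on $\{\mathcal I=1\}$, $h_1=0$ on $\{\mathcal I=2\}$, and let $N(\tau,\sigma)=\mathbb E[\mathcal P(\tau,\sigma)]$. Then $$\sup_{\sigma\in\mathcal T^R(\mathcal F^2_t)}\inf_{\tau\in\mathcal T^R(\mathcal F^1_t)}N(\tau,\sigma)\le\tfrac12<\inf_{\tau\in\mathcal T^R(\mathcal F^1_t)}\sup_{\sigma\in\mathcal T^R(\mathcal F^2_t)}N(\tau,\sigma),$$ so the game has no value in randomised strategies.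
   Context: For a filtration $(\mathcal G_t)_{t\in[0,1]}\subseteq(\mathcal F_t)$ on a complete probability space supporting independent uniform random variables independent of $\mathcal F_1$, $\mathcal A^\circ(\mathcal G_t)$ is the set of $(\mathcal G_t)$-adapted processes $\rho$ with, for every $\omega$, $t\mapsto\rho_t(\omega)$ càdlàg, non-decreasing, $\rho_{0-}=0$, $\rho_1=1$. A $(\mathcal G_t)$-randomised stopping time is $\eta=\inf\{t\in[0,1]:\rho_t>Z\}$ with $\rho\in\mathcal A^\circ(\mathcal G_t)$ and $Z\sim U([0,1])$ independent of $\mathcal F_1$; $\mathcal T^R(\mathcal G_t)$ is the set of these, and the randomisation devices of $\tau$ and $\sigma$ are independent of each other and of $\mathcal F_1$. Here $\tau$ (chosen by the informed player, who knows $\mathcal I$) is the minimiser and $\sigma$ (chosen by the uninformed player) the maximiser. *)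

theory Defs
  imports "HOL-Probability.Probability"
begin

definition filtr1 :: "'a measure \<Rightarrow> ('a \<Rightarrow> nat) \<Rightarrow> real \<Rightarrow> 'a measure" where
  "filtr1 M I t = sigma (space M) ({I -` A \<inter> space M | A. True} \<union> null_sets M)"

definition filtr2 :: "'a measure \<Rightarrow> real \<Rightarrow> 'a measure" where
  "filtr2 M t = sigma (space M) ({{}, space M} \<union> null_sets M)"

text \<open>The class A-circ(G_t): G-adapted processes rho on [0,1], with every path
  cadlag, non-decreasing, rho(0-) = 0 (i.e. rho_0 >= 0) and rho_1 = 1.\<close>
definition gen_proc :: "'a measure \<Rightarrow> (real \<Rightarrow> 'a measure) \<Rightarrow> (real \<Rightarrow> 'a \<Rightarrow> real) \<Rightarrow> bool" where
  "gen_proc M G \<rho> \<longleftrightarrow>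
     (\<forall>t\<in>{0..1}. (\<lambda>\<omega>. \<rho> t \<omega>) \<in> borel_measurable (G t)) \<and>
     (\<forall>\<omega>\<in>space M.
        mono_on {0..1} (\<lambda>t. \<rho> t \<omega>) \<and>
        0 \<le> \<rho> 0 \<omega> \<and> \<rho> 1 \<omega> = 1 \<and>
        (\<forall>t\<in>{0..<1}. continuous (at_right t) (\<lambda>s. \<rho> s \<omega>)) \<and>
        (\<forall>t\<in>{0<..1}. \<exists>l. ((\<lambda>s. \<rho> s \<omega>) \<longlongrightarrow> l) (at_left t)))"

definition rst :: "(real \<Rightarrow> 'a \<Rightarrow> real) \<Rightarrow> 'a \<Rightarrow> real \<Rightarrow> real" where
  "rst \<rho> \<omega> z = Inf {t\<in>{0..1}. \<rho> t \<omega> > z}"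

definition payoff :: "('a \<Rightarrow> nat) \<Rightarrow> real \<Rightarrow> real \<Rightarrow> 'a \<Rightarrow> real" where
  "payoff I \<tau> \<sigma> \<omega> =
     (if \<tau> < \<sigma> then 1
      else if \<sigma> < \<tau> then \<sigma> / 2
      else (if \<tau> < 1 then 1 else if I \<omega> = 1 then 2 else 0))"

definition unif01 :: "real measure" where
  "unif01 = uniform_measure lborel {0..1}"

text \<open>N(tau,sigma) = E[P(tau,sigma)], where tau is generated by rho with device Z1,
  sigma by xi with device Z2, Z1, Z2 independent uniforms independent of F_1
  (realised on the product of M with two copies of U([0,1])).\<close>
definition N_val :: "'a measure \<Rightarrow> ('a \<Rightarrow> nat) \<Rightarrow> (real \<Rightarrow> 'a \<Rightarrow> real) \<Rightarrow> (real \<Rightarrow> 'a \<Rightarrow> real) \<Rightarrow> real" where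
  "N_val M I \<rho> \<xi> =
     (\<integral>\<omega>. (\<integral>z1. (\<integral>z2. payoff I (rst \<rho> \<omega> z1) (rst \<xi> \<omega> z2) \<omega> \<partial>unif01) \<partial>unif01) \<partial>M)"

end

theory Submission
  imports Defs
begin

text \<open>The uninformed player's filtration is trivial, so every admissible \<open>\<xi>\<close> is almost surely a
  deterministic path \<open>x\<close>; the informed player's process is almost surely a deterministic path \<open>r\<^sub>k\<close> on
  each event \<open>{\<I> = k}\<close>. Hence \<open>N(\<tau>,\<sigma>)\<close> is the average of two games with deterministic randomisation
  paths, one for each type.

  Against a path \<open>x\<close> with \<open>L = sup\<^bsub>[0,1)\<^esub> x\<close>, the informed player stops at a time just after a point
  \<open>t'\<close> with \<open>x(t') > L - \<epsilon>\<close> on \<open>{\<I> = 1}\<close> and at time 1 on \<open>{\<I> = 2}\<close>: the two types together earn at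
  most \<open>1 + \<epsilon>\<close>, so the lower value is at most \<open>1/2\<close>.

  Against paths \<open>(r\<^sub>1, r\<^sub>2)\<close>, the uninformed player stops at time 1 if \<open>sup\<^bsub>[0,1)\<^esub> r\<^sub>1 \<le> 1/2\<close>, which
  earns at least \<open>3/2\<close> on \<open>{\<I> = 1}\<close>; otherwise \<open>r\<^sub>1\<close> exceeds \<open>2/5\<close> before 1, and stopping at some
  \<open>s \<ge> 19/20\<close> earns at least \<open>s + r\<^sub>1(s)/2 \<ge> 23/20\<close> from both types together. So the upper value
  is at least \<open>23/40\<close>.\<close>

section \<open>Games with deterministic randomisation paths\<close>

definition admissible_path :: "(real \<Rightarrow> real) \<Rightarrow> bool" where
  "admissible_path r \<longleftrightarrow> mono_on {0..1} r \<and> 0 \<le> r 0 \<and> r 1 = 1"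

text \<open>For \<open>z \<ge> 1\<close> the set below may be empty and \<open>Inf {}\<close> is a junk value; under \<open>unif01\<close>
  this only happens on a null set.\<close>

definition path_stop :: "(real \<Rightarrow> real) \<Rightarrow> real \<Rightarrow> real" where
  "path_stop r z = Inf {t\<in>{0..1}. z < r t}"

definition step_path :: "real \<Rightarrow> real \<Rightarrow> real" where
  "step_path c t = (if c \<le> t then 1 else 0)"

definition type_payoff :: "nat \<Rightarrow> real \<Rightarrow> real \<Rightarrow> real" where
  "type_payoff k \<tau> \<sigma> = (if \<tau> < \<sigma> then 1 else if \<sigma> < \<tau> then \<sigma> / 2
      else if \<tau> < 1 then 1 else if k = 1 then 2 else 0)"

definition path_value :: "(real \<Rightarrow> real) \<Rightarrow> (real \<Rightarrow> real) \<Rightarrow> nat \<Rightarrow> real" where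
  "path_value r x k =
     (\<integral>z1. (\<integral>z2. type_payoff k (path_stop r z1) (path_stop x z2) \<partial>unif01) \<partial>unif01)"

lemma rst_eq_path_stop: "rst \<rho> \<omega> = path_stop (\<lambda>t. \<rho> t \<omega>)"
  by (simp add: rst_def path_stop_def fun_eq_iff)

lemma payoff_eq_type_payoff: "payoff I \<tau> \<sigma> \<omega> = type_payoff (I \<omega>) \<tau> \<sigma>"
  by (simp add: payoff_def type_payoff_def)

lemma type_payoff_measurable[measurable]:
  assumes [measurable]: "a \<in> borel_measurable N" "b \<in> borel_measurable N"
  shows "(\<lambda>z. type_payoff k (a z) (b z)) \<in> borel_measurable N"
  unfolding type_payoff_def by measurable

lemma type_payoff_bounds: "0 \<le> \<sigma> \<Longrightarrow> \<sigma> \<le> 1 \<Longrightarrow> 0 \<le> type_payoff k \<tau> \<sigma> \<and> type_payoff k \<tau> \<sigma> \<le> 2"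
  by (simp add: type_payoff_def)

lemma admissible_path_range:
  "admissible_path r \<Longrightarrow> t \<in> {0..1} \<Longrightarrow> 0 \<le> r t \<and> r t \<le> 1"
  unfolding admissible_path_def mono_on_def
  by (metis atLeastAtMost_iff order.trans order_refl zero_le_one)

lemma admissible_path_Sup:
  assumes "admissible_path r"
  shows "bdd_above (r ` {0..<1})" "0 \<le> Sup (r ` {0..<1})" "Sup (r ` {0..<1}) \<le> 1"
    and "u \<in> {0..<1} \<Longrightarrow> r u \<le> Sup (r ` {0..<1})"
proof -
  show bdd: "bdd_above (r ` {0..<1})"
    using admissible_path_range[OF assms] by (intro bdd_aboveI[where M=1]) auto
  show upper: "u \<in> {0..<1} \<Longrightarrow> r u \<le> Sup (r ` {0..<1})" for u
    using bdd by (intro cSup_upper) auto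
  show "Sup (r ` {0..<1}) \<le> 1"
    using admissible_path_range[OF assms] by (intro cSup_least) auto
  show "0 \<le> Sup (r ` {0..<1})"
    using upper[of 0] admissible_path_range[OF assms, of 0] by auto
qed

lemma step_path_admissible: "c \<in> {0..1} \<Longrightarrow> admissible_path (step_path c)"
  unfolding admissible_path_def step_path_def mono_on_def by auto

lemma path_stop_le: "u \<in> {0..1} \<Longrightarrow> z < r u \<Longrightarrow> path_stop r z \<le> u"
  unfolding path_stop_def by (rule cInf_lower) auto

lemma path_stop_range:
  assumes "admissible_path r" "z < 1"
  shows "0 \<le> path_stop r z \<and> path_stop r z \<le> 1"
proof
  show "path_stop r z \<le> 1"
    using assms by (intro path_stop_le) (auto simp: admissible_path_def)
  have "{t\<in>{0..1}. z < r t} \<noteq> {}"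
    using assms by (auto simp: admissible_path_def)
  then show "0 \<le> path_stop r z"
    unfolding path_stop_def by (rule cInf_greatest) auto
qed

lemma path_stop_lt_one:
  assumes "admissible_path r" "z < 1" "path_stop r z < 1"
  shows "\<exists>u\<in>{0..<1}. z < r u"
proof -
  have "{t\<in>{0..1}. z < r t} \<noteq> {}"
    using assms by (auto simp: admissible_path_def)
  then obtain t where "t \<in> {0..1}" "z < r t" "t < 1"
    using assms(3) unfolding path_stop_def by (subst (asm) cInf_less_iff) auto
  then show ?thesis by auto
qed

lemma path_stop_mono:
  assumes "admissible_path r" "z \<le> z'" "z' < 1"
  shows "path_stop r z \<le> path_stop r z'"
  unfolding path_stop_def
proof (rule cInf_superset_mono)
  show "{t\<in>{0..1}. z' < r t} \<noteq> {}"
    using assms by (auto simp: admissible_path_def)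
qed (use assms in auto)

lemma path_stop_measurable[measurable]:
  assumes "admissible_path r"
  shows "path_stop r \<in> borel_measurable borel"
proof -
  define m where "m z = (if z < 1 then path_stop r z else 1)" for z
  have "mono m"
    by (rule monoI) (auto simp: m_def path_stop_mono[OF assms] path_stop_range[OF assms])
  then have [measurable]: "m \<in> borel_measurable borel"
    by (rule borel_measurable_mono)
  have "path_stop r z = Inf {}" if "1 \<le> z" for z
  proof -
    have "{t\<in>{0..1}. z < r t} = {}"
      using admissible_path_range[OF assms] that by force
    then show ?thesis
      unfolding path_stop_def by (simp only:)
  qed
  then have "path_stop r = (\<lambda>z. if z < 1 then m z else Inf {})"
    by (auto simp: m_def fun_eq_iff)
  also have "\<dots> \<in> borel_measurable borel"
    by measurable
  finally show ?thesis .
qed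

lemma path_stop_step_path:
  assumes "c \<in> {0..1}" "0 \<le> z" "z < 1"
  shows "path_stop (step_path c) z = c"
proof -
  have "{t\<in>{0..1}. z < step_path c t} = {c..1}"
    using assms by (auto simp: step_path_def)
  then show ?thesis
    using assms by (simp add: path_stop_def)
qed

lemma path_stop_cong: "(\<And>t. t \<in> {0..1} \<Longrightarrow> r t = r' t) \<Longrightarrow> path_stop r = path_stop r'"
  unfolding path_stop_def fun_eq_iff by (metis (mono_tags, lifting) Collect_cong)

lemma prob_space_unif01: "prob_space unif01"
  unfolding unif01_def by (rule prob_space_uniform_measure) auto

interpretation unif01: prob_space unif01
  by (rule prob_space_unif01)

lemma sets_unif01[measurable_cong]: "sets unif01 = sets borel"
  by (simp add: unif01_def)

lemma space_unif01: "space unif01 = UNIV"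
  by (simp add: unif01_def)

lemma AE_unif01: "AE z in unif01. 0 \<le> z \<and> z < 1"
  unfolding unif01_def
proof (rule AE_uniform_measureI)
  show "AE x in lborel. x \<in> {0..1::real} \<longrightarrow> 0 \<le> x \<and> x < 1"
    using AE_lborel_singleton[of "1::real"] by eventually_elim auto
qed auto

lemma measure_unif01: "B \<in> sets borel \<Longrightarrow> measure unif01 B = measure lborel ({0..1} \<inter> B)"
  unfolding unif01_def by (subst measure_uniform_measure) auto

lemma measure_unif01_intervals:
  assumes "0 \<le> a" "a \<le> b" "b \<le> 1"
  shows "measure unif01 {a..<b} = b - a" "measure unif01 {..<b} = b" "measure unif01 {a..} = 1 - a"
proof -
  have "{0..1} \<inter> {a..<b} = {a..<b}" "{0..1} \<inter> {..<b} = {0..<b}" "{0..1} \<inter> {a..} = {a..1}"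
    using assms by auto
  then show "measure unif01 {a..<b} = b - a" "measure unif01 {..<b} = b" "measure unif01 {a..} = 1 - a"
    using assms by (simp_all add: measure_unif01)
qed

lemma integrable_unif01:
  fixes f :: "real \<Rightarrow> real"
  assumes "f \<in> borel_measurable borel" "\<And>z. 0 \<le> z \<Longrightarrow> z < 1 \<Longrightarrow> \<bar>f z\<bar> \<le> B"
  shows "integrable unif01 f"
proof (rule unif01.integrable_const_bound[where B=B])
  show "AE x in unif01. norm (f x) \<le> B"
    using AE_unif01 by eventually_elim (use assms in auto)
qed (use assms in simp)

lemma integral_unif01_affine_indicator:
  assumes "S \<in> sets borel"
  shows "(\<integral>z. c1 + c2 * indicator S z \<partial>unif01) = c1 + c2 * measure unif01 S"
proof -
  have "(\<integral>z. c1 + c2 * indicator S z \<partial>unif01) = (\<integral>z. c1 \<partial>unif01) + (\<integral>z. c2 * indicator S z \<partial>unif01)"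
    by (rule Bochner_Integration.integral_add; rule integrable_unif01[where B="\<bar>c1\<bar> + \<bar>c2\<bar>"])
      (use assms in \<open>auto simp: indicator_def\<close>)
  then show ?thesis
    using unif01.prob_space by (simp add: space_unif01)
qed

lemma (in prob_space) integral_le_nonneg_const:
  fixes f :: "'a \<Rightarrow> real"
  assumes "AE x in M. f x \<le> c" "0 \<le> c"
  shows "integral\<^sup>L M f \<le> c"
  using integral_mono_AE'[of M "\<lambda>_. c" f] assms by (simp add: prob_space)

lemma integrable_type_payoff_path_stop:
  assumes "admissible_path r" "c \<in> {0..1}"
  shows "integrable unif01 (\<lambda>z. type_payoff k (path_stop r z) c)"
    and "integrable unif01 (\<lambda>z. type_payoff k c (path_stop r z))"
  using assms path_stop_range[OF assms(1)]
  by (auto intro!: integrable_unif01[where B=2] simp: type_payoff_def)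

lemma path_value_step_right:
  assumes "admissible_path r" "c \<in> {0..1}"
  shows "path_value r (step_path c) k = (\<integral>z. type_payoff k (path_stop r z) c \<partial>unif01)"
  unfolding path_value_def
proof (rule Bochner_Integration.integral_cong[OF refl])
  fix z1
  have [measurable]: "path_stop (step_path c) \<in> borel_measurable borel"
    using step_path_admissible[OF assms(2)] by measurable
  have "AE z2 in unif01. type_payoff k (path_stop r z1) (path_stop (step_path c) z2)
      = type_payoff k (path_stop r z1) c"
    using AE_unif01 by eventually_elim (use assms(2) path_stop_step_path in auto)
  then show "(\<integral>z2. type_payoff k (path_stop r z1) (path_stop (step_path c) z2) \<partial>unif01)
      = type_payoff k (path_stop r z1) c"
    by (subst integral_cong_AE[where g="\<lambda>_. type_payoff k (path_stop r z1) c"])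
      (simp_all add: unif01.prob_space)
qed

text \<open>Only an upper bound: this avoids proving measurability of the inner integral in \<open>z1\<close>.\<close>

lemma path_value_step_left_le:
  assumes "admissible_path x" "c \<in> {0..1}"
  shows "path_value (step_path c) x k \<le> (\<integral>z. type_payoff k c (path_stop x z) \<partial>unif01)"
  unfolding path_value_def
proof (rule unif01.integral_le_nonneg_const)
  show "AE z1 in unif01. (\<integral>z2. type_payoff k (path_stop (step_path c) z1) (path_stop x z2) \<partial>unif01)
      \<le> (\<integral>z2. type_payoff k c (path_stop x z2) \<partial>unif01)"
    using AE_unif01 by eventually_elim (use assms path_stop_step_path in auto)
  show "0 \<le> (\<integral>z. type_payoff k c (path_stop x z) \<partial>unif01)"
    by (rule integral_nonneg_AE)
      (use AE_unif01 in \<open>eventually_elim, auto simp: type_payoff_bounds path_stop_range[OF assms(1)]\<close>)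
qed

lemma path_value_bounds:
  assumes "admissible_path x"
  shows "0 \<le> path_value r x k \<and> path_value r x k \<le> 2"
proof -
  have inner: "0 \<le> (\<integral>z. type_payoff k a (path_stop x z) \<partial>unif01)
      \<and> (\<integral>z. type_payoff k a (path_stop x z) \<partial>unif01) \<le> 2" for a
  proof
    show "0 \<le> (\<integral>z. type_payoff k a (path_stop x z) \<partial>unif01)"
      by (rule integral_nonneg_AE)
        (use AE_unif01 in \<open>eventually_elim, auto simp: type_payoff_bounds path_stop_range[OF assms]\<close>)
    show "(\<integral>z. type_payoff k a (path_stop x z) \<partial>unif01) \<le> 2"
      by (rule unif01.integral_le_nonneg_const)
        (use AE_unif01 in \<open>eventually_elim, auto simp: type_payoff_bounds path_stop_range[OF assms]\<close>)
  qed
  show ?thesis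
    unfolding path_value_def
  proof
    show "0 \<le> (\<integral>z1. (\<integral>z2. type_payoff k (path_stop r z1) (path_stop x z2) \<partial>unif01) \<partial>unif01)"
      by (rule integral_nonneg_AE[OF AE_I2]) (use inner in blast)
    show "(\<integral>z1. (\<integral>z2. type_payoff k (path_stop r z1) (path_stop x z2) \<partial>unif01) \<partial>unif01) \<le> 2"
      by (rule unif01.integral_le_nonneg_const[OF AE_I2]) (use inner in auto)
  qed
qed

lemma path_value_sum_informed_stop_le:
  assumes x: "admissible_path x" and t': "t' \<in> {0..<1}"
  shows "path_value (step_path ((t' + 1) / 2)) x 1 + path_value (step_path 1) x 2
    \<le> 1 + (Sup (x ` {0..<1}) - x t') / 2"
proof -
  define L where "L = Sup (x ` {0..<1})"
  define t where "t = (t' + 1) / 2"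
  have t: "t \<in> {0..1}" "t' < t" "t < 1"
    using t' by (auto simp: t_def)
  have L: "x t' \<le> L" "L \<le> 1" "\<And>u. u \<in> {0..<1} \<Longrightarrow> x u \<le> L"
    using admissible_path_Sup[OF x] t' by (auto simp: L_def)
  have "path_value (step_path t) x 1 + path_value (step_path 1) x 2
      \<le> (\<integral>z. type_payoff 1 t (path_stop x z) \<partial>unif01) + (\<integral>z. type_payoff 2 1 (path_stop x z) \<partial>unif01)"
    using path_value_step_left_le[OF x t(1)] path_value_step_left_le[OF x, of 1] by (intro add_mono) auto
  also have "\<dots> = (\<integral>z. type_payoff 1 t (path_stop x z) + type_payoff 2 1 (path_stop x z) \<partial>unif01)"
    using t by (intro Bochner_Integration.integral_add[symmetric] integrable_type_payoff_path_stop x) auto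
  also have "\<dots> \<le> (\<integral>z. 1 + (1/2) * indicator {x t'..<L} z \<partial>unif01)"
  proof (rule integral_mono_AE)
    show "integrable unif01 (\<lambda>z. type_payoff 1 t (path_stop x z) + type_payoff 2 1 (path_stop x z))"
      using t by (intro Bochner_Integration.integrable_add integrable_type_payoff_path_stop x) auto
    show "integrable unif01 (\<lambda>z. 1 + (1/2) * indicator {x t'..<L} z :: real)"
      by (rule integrable_unif01[where B=2]) (auto simp: indicator_def)
    show "AE z in unif01. type_payoff 1 t (path_stop x z) + type_payoff 2 1 (path_stop x z)
        \<le> 1 + (1/2) * indicator {x t'..<L} z"
      using AE_unif01
    proof eventually_elim
      case (elim z)
      define \<sigma> where "\<sigma> = path_stop x z"
      have \<sigma>: "0 \<le> \<sigma>" "\<sigma> \<le> 1"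
        using path_stop_range[OF x, of z] elim by (auto simp: \<sigma>_def)
      have early: "\<sigma> \<le> t'" if "z < x t'"
        unfolding \<sigma>_def using t' that by (intro path_stop_le) auto
      have "z < L" if "\<sigma> < 1"
        using path_stop_lt_one[OF x, of z] elim that L(3) by (force simp: \<sigma>_def)
      then show ?case
        unfolding \<sigma>_def[symmetric] using early \<sigma> t
        by (cases "z < x t'"; cases "\<sigma> < 1") (auto simp: type_payoff_def indicator_def)
    qed
  qed
  also have "\<dots> = 1 + (L - x t') / 2"
    using L admissible_path_range[OF x, of t'] t'
    by (subst integral_unif01_affine_indicator) (auto simp: measure_unif01_intervals)
  finally show ?thesis
    by (simp add: L_def t_def)
qed

lemma ex_informed_step_path_value_sum_le:
  assumes x: "admissible_path x" and "0 < e"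
  shows "\<exists>t\<in>{0..1}. path_value (step_path t) x 1 + path_value (step_path 1) x 2 \<le> 1 + e"
proof -
  define L where "L = Sup (x ` {0..<1})"
  have "L - 2 * e < L"
    using \<open>0 < e\<close> by simp
  then obtain t' where t': "t' \<in> {0..<1}" "L - 2 * e < x t'"
    unfolding L_def by (rule less_cSupE) auto
  have "path_value (step_path ((t' + 1) / 2)) x 1 + path_value (step_path 1) x 2 \<le> 1 + (L - x t') / 2"
    using path_value_sum_informed_stop_le[OF x t'(1)] by (simp add: L_def)
  also have "\<dots> \<le> 1 + e"
    using t'(2) by simp
  finally show ?thesis
    using t'(1) by (intro bexI[of _ "(t' + 1) / 2"]) auto
qed

lemma path_value_sum_uninformed_stop_ge:
  assumes r1: "admissible_path r1" and r2: "admissible_path r2" and s: "s \<in> {0..<1}"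
  shows "s + r1 s / 2 \<le> path_value r1 (step_path s) 1 + path_value r2 (step_path s) 2"
proof -
  have s1: "s \<in> {0..1}"
    using s by auto
  have v: "0 \<le> r1 s" "r1 s \<le> 1"
    using admissible_path_range[OF r1 s1] by auto
  have "s/2 + r1 s/2 = (\<integral>z. s/2 + (1/2) * indicator {..<r1 s} z \<partial>unif01)"
    using v by (subst integral_unif01_affine_indicator) (auto simp: measure_unif01_intervals)
  also have "\<dots> \<le> (\<integral>z. type_payoff 1 (path_stop r1 z) s \<partial>unif01)"
  proof (rule integral_mono_AE)
    show "integrable unif01 (\<lambda>z. s/2 + (1/2) * indicator {..<r1 s} z :: real)"
      by (rule integrable_unif01[where B=2]) (use s in \<open>auto simp: indicator_def\<close>)
    show "integrable unif01 (\<lambda>z. type_payoff 1 (path_stop r1 z) s)"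
      by (rule integrable_type_payoff_path_stop[OF r1 s1])
    show "AE z in unif01. s/2 + (1/2) * indicator {..<r1 s} z \<le> type_payoff 1 (path_stop r1 z) s"
      using AE_unif01
    proof eventually_elim
      case (elim z)
      have "path_stop r1 z \<le> s" if "z < r1 s"
        using s1 that by (intro path_stop_le)
      then show ?case
        using s by (cases "z < r1 s") (auto simp: type_payoff_def indicator_def)
    qed
  qed
  also have "\<dots> = path_value r1 (step_path s) 1"
    by (rule path_value_step_right[OF r1 s1, symmetric])
  finally have type1: "s/2 + r1 s/2 \<le> path_value r1 (step_path s) 1" .
  have "s/2 \<le> (\<integral>z. type_payoff 2 (path_stop r2 z) s \<partial>unif01)"
  proof (rule unif01.integral_ge_const)
    show "integrable unif01 (\<lambda>z. type_payoff 2 (path_stop r2 z) s)"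
      by (rule integrable_type_payoff_path_stop[OF r2 s1])
    show "AE z in unif01. s/2 \<le> type_payoff 2 (path_stop r2 z) s"
      using s by (intro AE_I2) (auto simp: type_payoff_def)
  qed
  also have "\<dots> = path_value r2 (step_path s) 2"
    by (rule path_value_step_right[OF r2 s1, symmetric])
  finally show ?thesis
    using type1 by simp
qed

lemma path_value_sum_uninformed_stop_at_one_ge:
  assumes r1: "admissible_path r1" and r2: "admissible_path r2"
  shows "2 - Sup (r1 ` {0..<1}) \<le> path_value r1 (step_path 1) 1 + path_value r2 (step_path 1) 2"
proof -
  define L where "L = Sup (r1 ` {0..<1})"
  have L: "0 \<le> L" "L \<le> 1" "\<And>u. u \<in> {0..<1} \<Longrightarrow> r1 u \<le> L"
    using admissible_path_Sup[OF r1] by (auto simp: L_def)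
  have one: "(1::real) \<in> {0..1}"
    by simp
  have "2 - L = (\<integral>z. 1 + 1 * indicator {L..} z \<partial>unif01)"
    using L by (subst integral_unif01_affine_indicator) (auto simp: measure_unif01_intervals)
  also have "\<dots> \<le> (\<integral>z. type_payoff 1 (path_stop r1 z) 1 \<partial>unif01)"
  proof (rule integral_mono_AE)
    show "integrable unif01 (\<lambda>z. 1 + 1 * indicator {L..} z :: real)"
      by (rule integrable_unif01[where B=2]) (auto simp: indicator_def)
    show "integrable unif01 (\<lambda>z. type_payoff 1 (path_stop r1 z) 1)"
      by (rule integrable_type_payoff_path_stop[OF r1 one])
    show "AE z in unif01. 1 + 1 * indicator {L..} z \<le> type_payoff 1 (path_stop r1 z) 1"
      using AE_unif01
    proof eventually_elim
      case (elim z)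
      have "z < L" if "path_stop r1 z < 1"
        using path_stop_lt_one[OF r1, of z] elim that L(3) by force
      then show ?case
        using path_stop_range[OF r1, of z] elim
        by (cases "path_stop r1 z < 1") (auto simp: type_payoff_def indicator_def)
    qed
  qed
  also have "\<dots> = path_value r1 (step_path 1) 1"
    by (rule path_value_step_right[OF r1 one, symmetric])
  finally show ?thesis
    using path_value_bounds[OF step_path_admissible[OF one], of r2 2] by (simp add: L_def)
qed

lemma ex_uninformed_step_path_value_sum_ge:
  assumes r1: "admissible_path r1" and r2: "admissible_path r2"
  shows "\<exists>c\<in>{0..1}. 23/20 \<le> path_value r1 (step_path c) 1 + path_value r2 (step_path c) 2"
proof (cases "Sup (r1 ` {0..<1}) \<le> 1/2")
  case True
  then show ?thesis
    using path_value_sum_uninformed_stop_at_one_ge[OF r1 r2] by (intro bexI[of _ 1]) auto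
next
  case False
  then have "2/5 < Sup (r1 ` {0..<1})"
    by simp
  then obtain y where "y \<in> r1 ` {0..<1}" "2/5 < y"
    by (rule less_cSupE) auto
  then obtain u where u: "u \<in> {0..<1}" "2/5 < r1 u"
    by auto
  define s where "s = max u (19/20)"
  have s: "s \<in> {0..<1}" "u \<le> s" "19/20 \<le> s"
    using u by (auto simp: s_def)
  have "r1 u \<le> r1 s"
    using r1 u s unfolding admissible_path_def mono_on_def by auto
  then have "23/20 \<le> s + r1 s / 2"
    using u s by simp
  then show ?thesis
    using path_value_sum_uninformed_stop_ge[OF r1 r2 s(1)] s by (intro bexI[of _ s]) auto
qed

section \<open>Processes adapted to filtrations that are trivial modulo null sets\<close>

definition null_or_conull_on :: "'a measure \<Rightarrow> 'a set \<Rightarrow> 'a set set \<Rightarrow> bool" where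
  "null_or_conull_on M E A \<longleftrightarrow> (\<forall>S\<in>A. S \<inter> E \<in> null_sets M \<or> E - S \<in> null_sets M)"

lemma null_or_conull_on_sigma_sets:
  assumes A: "A \<subseteq> sets M" and E: "E \<in> sets M" and triv: "null_or_conull_on M E A"
  shows "null_or_conull_on M E (sigma_sets (space M) A)"
  unfolding null_or_conull_on_def
proof
  fix S assume "S \<in> sigma_sets (space M) A"
  then have "S \<in> sets M \<and> (S \<inter> E \<in> null_sets M \<or> E - S \<in> null_sets M)"
  proof induct
    case (Basic S)
    then show ?case
      using A triv by (auto simp: null_or_conull_on_def)
  next
    case Empty
    show ?case by simp
  next
    case (Compl S)
    have "(space M - S) \<inter> E = E - S" "E - (space M - S) = S \<inter> E"
      using sets.sets_into_space[OF E] by auto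
    then show ?case
      using Compl by auto
  next
    case (Union S)
    have S: "range S \<subseteq> sets M"
      using Union by blast
    show ?case
    proof (cases "\<forall>i. S i \<inter> E \<in> null_sets M")
      case True
      then have "(\<Union>i. S i \<inter> E) \<in> null_sets M"
        by (intro null_sets_UN) auto
      then show ?thesis
        using S by (auto simp: UN_extend_simps(4)[symmetric])
    next
      case False
      then obtain i where "E - S i \<in> null_sets M"
        using Union by blast
      moreover have "E - (\<Union>i. S i) \<subseteq> E - S i"
        by auto
      ultimately show ?thesis
        using S E by (blast intro: null_sets_subset)
    qed
  qed
  then show "S \<inter> E \<in> null_sets M \<or> E - S \<in> null_sets M"
    by blast
qed

lemma eq_if_same_rat_upper_bounds:
  fixes a b :: real
  assumes "{q\<in>\<rat>. a \<le> q} = {q\<in>\<rat>. b \<le> q}"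
  shows "a = b"
proof (rule ccontr)
  assume "a \<noteq> b"
  then consider "a < b" | "b < a"
    by linarith
  then show False
  proof cases
    case 1
    then obtain q where "q \<in> \<rat>" "a < q" "q < b"
      using Rats_dense_in_real by blast
    then show False
      using assms[unfolded set_eq_iff, rule_format, of q] by auto
  next
    case 2
    then obtain q where "q \<in> \<rat>" "b < q" "q < a"
      using Rats_dense_in_real by blast
    then show False
      using assms[unfolded set_eq_iff, rule_format, of q] by auto
  qed
qed

lemma null_or_conull_on_AE_rat_upper_bounds:
  fixes f :: "'a \<Rightarrow> real"
  assumes triv: "null_or_conull_on M E (sets N)" and space: "space N = space M"
    and f: "f \<in> borel_measurable N"
  shows "\<exists>D. AE \<omega> in M. \<omega> \<in> E \<longrightarrow> {q\<in>\<rat>. f \<omega> \<le> q} = D"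
proof -
  define D where "D = {q\<in>\<rat>. E - {\<omega>\<in>space M. f \<omega> \<le> q} \<in> null_sets M}"
  have "AE \<omega> in M. \<omega> \<in> E \<longrightarrow> (f \<omega> \<le> q \<longleftrightarrow> q \<in> D)" if q: "q \<in> \<rat>" for q
  proof (cases "E - {\<omega>\<in>space M. f \<omega> \<le> q} \<in> null_sets M")
    case True
    then have "AE \<omega> in M. \<omega> \<notin> E - {\<omega>\<in>space M. f \<omega> \<le> q}"
      by (rule AE_not_in)
    then show ?thesis
      using AE_space by eventually_elim (use True q in \<open>auto simp: D_def\<close>)
  next
    case False
    have "f -` {..q} \<inter> space N \<in> sets N"
      using f by (rule measurable_sets) simp
    moreover have "f -` {..q} \<inter> space N = {\<omega>\<in>space M. f \<omega> \<le> q}"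
      using space by auto
    ultimately have "{\<omega>\<in>space M. f \<omega> \<le> q} \<in> sets N"
      by simp
    then have "{\<omega>\<in>space M. f \<omega> \<le> q} \<inter> E \<in> null_sets M"
      using triv False by (auto simp: null_or_conull_on_def)
    then have "AE \<omega> in M. \<omega> \<notin> {\<omega>\<in>space M. f \<omega> \<le> q} \<inter> E"
      by (rule AE_not_in)
    then show ?thesis
      using AE_space by eventually_elim (use False in \<open>auto simp: D_def\<close>)
  qed
  then have "AE \<omega> in M. \<forall>q\<in>\<rat>. \<omega> \<in> E \<longrightarrow> (f \<omega> \<le> q \<longleftrightarrow> q \<in> D)"
    by (subst AE_ball_countable) (auto simp: countable_rat)
  then have "AE \<omega> in M. \<omega> \<in> E \<longrightarrow> {q\<in>\<rat>. f \<omega> \<le> q} = D"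
    by eventually_elim (auto simp: D_def)
  then show ?thesis ..
qed

lemma AE_imp_ex_in:
  assumes "AE \<omega> in M. \<omega> \<in> E \<longrightarrow> P \<omega>" "E \<in> sets M" "emeasure M E \<noteq> 0"
  shows "\<exists>\<omega>\<in>E. P \<omega>"
proof (rule ccontr)
  assume "\<not> (\<exists>\<omega>\<in>E. P \<omega>)"
  then have "AE \<omega> in M. \<omega> \<notin> E"
    using assms(1) by auto
  then have "E \<in> null_sets M"
    using AE_iff_null_sets[OF assms(2)] by simp
  then show False
    using assms(3) by auto
qed

lemma right_continuous_eq_on_rats:
  fixes f g :: "real \<Rightarrow> real"
  assumes f: "\<And>t. t \<in> {0..<1} \<Longrightarrow> continuous (at_right t) f"
    and g: "\<And>t. t \<in> {0..<1} \<Longrightarrow> continuous (at_right t) g"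
    and rats: "\<And>q. q \<in> \<rat> \<Longrightarrow> q \<in> {0..1} \<Longrightarrow> f q = g q"
    and t: "t \<in> {0..1}"
  shows "f t = g t"
proof (rule ccontr)
  assume ne: "f t \<noteq> g t"
  then have "t \<noteq> 1"
    using rats[of 1] by auto
  with t have "t \<in> {0..<1}"
    by simp
  then have "((\<lambda>s. f s - g s) \<longlongrightarrow> f t - g t) (at_right t)"
    using continuous_diff[OF f g] by (simp add: continuous_within)
  then have "eventually (\<lambda>s. f s - g s \<noteq> 0) (at_right t)"
    by (rule tendsto_imp_eventually_ne) (use ne in auto)
  then obtain b where b: "t < b" "\<And>s. t < s \<Longrightarrow> s < b \<Longrightarrow> f s - g s \<noteq> 0"
    by (auto simp: eventually_at_right_field)
  obtain q where "q \<in> \<rat>" "t < q" "q < min b 1"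
    using Rats_dense_in_real[of t "min b 1"] b \<open>t \<in> {0..<1}\<close> by auto
  then show False
    using b(2)[of q] rats[of q] t by auto
qed

lemma gen_proc_path:
  "gen_proc M G \<rho> \<Longrightarrow> \<omega> \<in> space M \<Longrightarrow> admissible_path (\<lambda>t. \<rho> t \<omega>)"
  by (simp add: gen_proc_def admissible_path_def)

lemma gen_proc_right_continuous:
  "gen_proc M G \<rho> \<Longrightarrow> \<omega> \<in> space M \<Longrightarrow> t \<in> {0..<1} \<Longrightarrow> continuous (at_right t) (\<lambda>s. \<rho> s \<omega>)"
  by (simp add: gen_proc_def)

text \<open>Each \<open>\<rho> t\<close> for rational \<open>t\<close> is determined almost surely on \<open>E\<close> by its rational upper bounds;
  a single good point \<open>\<omega>\<^sub>0 \<in> E\<close> then supplies the path, and right continuity extends the equality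
  from rational times to all of \<open>[0,1]\<close>.\<close>

lemma gen_proc_AE_path_on:
  assumes \<rho>: "gen_proc M G \<rho>" and E: "E \<in> sets M" "emeasure M E \<noteq> 0"
    and space: "\<And>t. t \<in> {0..1} \<Longrightarrow> space (G t) = space M"
    and triv: "\<And>t. t \<in> {0..1} \<Longrightarrow> null_or_conull_on M E (sets (G t))"
  shows "\<exists>r. admissible_path r \<and> (AE \<omega> in M. \<omega> \<in> E \<longrightarrow> (\<forall>t\<in>{0..1}. \<rho> t \<omega> = r t))"
proof -
  let ?T = "\<rat> \<inter> {0..1::real}"
  have "\<forall>t\<in>?T. \<exists>D. AE \<omega> in M. \<omega> \<in> E \<longrightarrow> {q\<in>\<rat>. \<rho> t \<omega> \<le> q} = D"
  proof
    fix t assume "t \<in> ?T"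
    then have t: "t \<in> {0..1}"
      by simp
    with \<rho> have "\<rho> t \<in> borel_measurable (G t)"
      by (simp add: gen_proc_def)
    then show "\<exists>D. AE \<omega> in M. \<omega> \<in> E \<longrightarrow> {q\<in>\<rat>. \<rho> t \<omega> \<le> q} = D"
      by (rule null_or_conull_on_AE_rat_upper_bounds[OF triv[OF t] space[OF t]])
  qed
  from bchoice[OF this] obtain D
    where "\<forall>t\<in>?T. AE \<omega> in M. \<omega> \<in> E \<longrightarrow> {q\<in>\<rat>. \<rho> t \<omega> \<le> q} = D t"
    by blast
  moreover have "countable ?T"
    by (intro countable_Int1 countable_rat)
  ultimately have "AE \<omega> in M. \<forall>t\<in>?T. \<omega> \<in> E \<longrightarrow> {q\<in>\<rat>. \<rho> t \<omega> \<le> q} = D t"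
    by (subst AE_ball_countable)
  then have good: "AE \<omega> in M. \<omega> \<in> E \<longrightarrow> \<omega> \<in> space M \<and> (\<forall>t\<in>?T. {q\<in>\<rat>. \<rho> t \<omega> \<le> q} = D t)"
    using AE_space by eventually_elim simp
  obtain \<omega>0 where \<omega>0: "\<omega>0 \<in> space M" "\<forall>t\<in>?T. {q\<in>\<rat>. \<rho> t \<omega>0 \<le> q} = D t"
    using AE_imp_ex_in[OF good E] by (elim bexE conjE)
  have "AE \<omega> in M. \<omega> \<in> E \<longrightarrow> (\<forall>t\<in>{0..1}. \<rho> t \<omega> = \<rho> t \<omega>0)"
    using good
  proof eventually_elim
    case (elim \<omega>)
    show ?case
    proof (intro impI ballI)
      fix t :: real assume "\<omega> \<in> E" "t \<in> {0..1}"
      with elim have \<omega>: "\<omega> \<in> space M" "\<forall>t\<in>?T. {q\<in>\<rat>. \<rho> t \<omega> \<le> q} = D t"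
        by auto
      have "\<rho> q \<omega> = \<rho> q \<omega>0" if "q \<in> \<rat>" "q \<in> {0..1}" for q
        using that \<omega>(2) \<omega>0(2) by (intro eq_if_same_rat_upper_bounds) auto
      then show "\<rho> t \<omega> = \<rho> t \<omega>0"
        using right_continuous_eq_on_rats[of "\<lambda>s. \<rho> s \<omega>" "\<lambda>s. \<rho> s \<omega>0" t] \<open>t \<in> {0..1}\<close>
          gen_proc_right_continuous[OF \<rho> \<omega>(1)] gen_proc_right_continuous[OF \<rho> \<omega>0(1)]
        by blast
    qed
  qed
  then show ?thesis
    using gen_proc_path[OF \<rho> \<omega>0(1)] by blast
qed

lemma space_filtr1: "I \<in> measurable M (count_space UNIV) \<Longrightarrow> space (filtr1 M I t) = space M"
  unfolding filtr1_def by (rule space_measure_of) (auto dest: sets.sets_into_space)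

lemma sets_filtr1:
  "I \<in> measurable M (count_space UNIV) \<Longrightarrow>
    sets (filtr1 M I t) = sigma_sets (space M) ({I -` A \<inter> space M | A. True} \<union> null_sets M)"
  unfolding filtr1_def by (rule sets_measure_of) (auto dest: sets.sets_into_space)

lemma null_or_conull_on_filtr1:
  assumes I: "I \<in> measurable M (count_space UNIV)"
  shows "null_or_conull_on M {\<omega>\<in>space M. I \<omega> = k} (sets (filtr1 M I t))"
  unfolding sets_filtr1[OF I]
proof (rule null_or_conull_on_sigma_sets)
  show "{I -` A \<inter> space M | A. True} \<union> null_sets M \<subseteq> sets M"
    using measurable_sets[OF I] by auto
  show E: "{\<omega>\<in>space M. I \<omega> = k} \<in> sets M"
    using I by measurable
  show "null_or_conull_on M {\<omega>\<in>space M. I \<omega> = k} ({I -` A \<inter> space M | A. True} \<union> null_sets M)"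
    unfolding null_or_conull_on_def
  proof
    fix S assume "S \<in> {I -` A \<inter> space M | A. True} \<union> null_sets M"
    then consider A where "S = I -` A \<inter> space M" | "S \<in> null_sets M"
      by blast
    then show "S \<inter> {\<omega>\<in>space M. I \<omega> = k} \<in> null_sets M \<or> {\<omega>\<in>space M. I \<omega> = k} - S \<in> null_sets M"
    proof cases
      case (1 A)
      show ?thesis
      proof (cases "k \<in> A")
        case True
        with 1 have eq: "{\<omega>\<in>space M. I \<omega> = k} - S = {}"
          by auto
        show ?thesis
          by (rule disjI2, subst eq) simp
      next
        case False
        with 1 have eq: "S \<inter> {\<omega>\<in>space M. I \<omega> = k} = {}"
          by auto
        show ?thesis
          by (rule disjI1, subst eq) simp
      qed
    next
      case 2
      then show ?thesis
        using E by (simp add: null_set_Int2)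
    qed
  qed
qed

lemma space_filtr2: "space (filtr2 M t) = space M"
  unfolding filtr2_def by (rule space_measure_of) (auto dest: sets.sets_into_space)

lemma null_or_conull_on_filtr2: "null_or_conull_on M (space M) (sets (filtr2 M t))"
proof -
  have "sets (filtr2 M t) = sigma_sets (space M) ({{}, space M} \<union> null_sets M)"
    unfolding filtr2_def by (rule sets_measure_of) (auto dest: sets.sets_into_space)
  also have "null_or_conull_on M (space M) \<dots>"
    by (rule null_or_conull_on_sigma_sets) (auto simp: null_or_conull_on_def intro: null_sets_subset)
  finally show ?thesis .
qed

lemma filtr2_gen_proc_AE_path:
  assumes "prob_space M" and \<xi>: "gen_proc M (filtr2 M) \<xi>"
  shows "\<exists>x. admissible_path x \<and> (AE \<omega> in M. \<forall>t\<in>{0..1}. \<xi> t \<omega> = x t)"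
proof -
  have "emeasure M (space M) \<noteq> 0"
    using prob_space.emeasure_space_1[OF assms(1)] by simp
  then obtain x where x: "admissible_path x"
    and on_space: "AE \<omega> in M. \<omega> \<in> space M \<longrightarrow> (\<forall>t\<in>{0..1}. \<xi> t \<omega> = x t)"
    using gen_proc_AE_path_on[OF \<xi> sets.top _ space_filtr2 null_or_conull_on_filtr2] by blast
  have "AE \<omega> in M. \<forall>t\<in>{0..1}. \<xi> t \<omega> = x t"
    using on_space AE_space by eventually_elim simp
  with x show ?thesis
    by blast
qed

lemma filtr1_gen_proc_AE_path_on_type:
  assumes \<rho>: "gen_proc M (filtr1 M I) \<rho>" and I: "I \<in> measurable M (count_space UNIV)"
    and "measure M {\<omega>\<in>space M. I \<omega> = k} \<noteq> 0"
  shows "\<exists>r. admissible_path r \<and> (AE \<omega> in M. I \<omega> = k \<longrightarrow> (\<forall>t\<in>{0..1}. \<rho> t \<omega> = r t))"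
proof -
  have E: "{\<omega>\<in>space M. I \<omega> = k} \<in> sets M"
    using I by measurable
  have "emeasure M {\<omega>\<in>space M. I \<omega> = k} \<noteq> 0"
    using assms(3) by (auto simp: measure_def)
  then obtain r where r: "admissible_path r"
    and on_E: "AE \<omega> in M. \<omega> \<in> {\<omega>\<in>space M. I \<omega> = k} \<longrightarrow> (\<forall>t\<in>{0..1}. \<rho> t \<omega> = r t)"
    using gen_proc_AE_path_on[OF \<rho> E _ space_filtr1[OF I] null_or_conull_on_filtr1[OF I]] by blast
  have "AE \<omega> in M. I \<omega> = k \<longrightarrow> (\<forall>t\<in>{0..1}. \<rho> t \<omega> = r t)"
    using on_E AE_space by eventually_elim simp
  with r show ?thesis
    by blast
qed

section \<open>The game value\<close>

lemma N_val_eq_integral_path_value: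
  "N_val M I \<rho> \<xi> = (\<integral>\<omega>. path_value (\<lambda>t. \<rho> t \<omega>) (\<lambda>t. \<xi> t \<omega>) (I \<omega>) \<partial>M)"
  unfolding N_val_def path_value_def rst_eq_path_stop payoff_eq_type_payoff ..

lemma path_value_cong:
  "(\<And>t. t \<in> {0..1} \<Longrightarrow> r t = r' t) \<Longrightarrow> (\<And>t. t \<in> {0..1} \<Longrightarrow> x t = x' t) \<Longrightarrow>
    path_value r x k = path_value r' x' k"
  unfolding path_value_def by (simp only: path_stop_cong[of r r'] path_stop_cong[of x x'])

lemma (in prob_space) N_val_bounds:
  assumes "gen_proc M G \<xi>"
  shows "0 \<le> N_val M I \<rho> \<xi> \<and> N_val M I \<rho> \<xi> \<le> 2"
proof -
  have "0 \<le> path_value (\<lambda>t. \<rho> t \<omega>) (\<lambda>t. \<xi> t \<omega>) (I \<omega>) \<and> path_value (\<lambda>t. \<rho> t \<omega>) (\<lambda>t. \<xi> t \<omega>) (I \<omega>) \<le> 2"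
    if "\<omega> \<in> space M" for \<omega>
    by (rule path_value_bounds[OF gen_proc_path[OF assms that]])
  then show ?thesis
    unfolding N_val_eq_integral_path_value
    by (intro conjI integral_nonneg_AE[OF AE_I2] integral_le_nonneg_const[OF AE_I2]) simp_all
qed

lemma (in complete_measure) borel_measurable_AE_eq:
  fixes f g :: "'a \<Rightarrow> real"
  assumes g: "g \<in> borel_measurable M" and ae: "AE \<omega> in M. f \<omega> = g \<omega>"
  shows "f \<in> borel_measurable M"
proof (rule measurableI)
  fix A :: "real set" assume "A \<in> sets borel"
  then have gA: "g -` A \<inter> space M \<in> sets M"
    by (rule measurable_sets[OF g])
  have "AE x in M. x \<in> g -` A \<inter> space M \<longleftrightarrow> x \<in> f -` A \<inter> space M"
    using ae AE_space by eventually_elim auto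
  then show "f -` A \<inter> space M \<in> sets M"
    by (rule in_sets_AE[OF _ gA]) auto
qed simp

lemma step_path_continuous_at_right: "continuous (at_right u) (step_path c)"
proof -
  have "eventually (\<lambda>s. step_path c s = step_path c u) (at_right u)"
    unfolding eventually_at_right_field
  proof (cases "c \<le> u")
    case True
    then show "\<exists>b>u. \<forall>s>u. s < b \<longrightarrow> step_path c s = step_path c u"
      by (intro exI[of _ "u + 1"]) (auto simp: step_path_def)
  next
    case False
    then show "\<exists>b>u. \<forall>s>u. s < b \<longrightarrow> step_path c s = step_path c u"
      by (intro exI[of _ c]) (auto simp: step_path_def)
  qed
  then show ?thesis
    unfolding continuous_within by (rule tendsto_eventually)
qed

lemma step_path_left_limit: "\<exists>l. (step_path c \<longlongrightarrow> l) (at_left u)"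
proof (cases "c < u")
  case True
  have "eventually (\<lambda>s. step_path c s = 1) (at_left u)"
    unfolding eventually_at_left_field using True by (intro exI[of _ c]) (auto simp: step_path_def)
  then show ?thesis
    by (intro exI[of _ 1]) (rule tendsto_eventually)
next
  case False
  have "eventually (\<lambda>s. step_path c s = 0) (at_left u)"
    unfolding eventually_at_left_field using False by (intro exI[of _ "u - 1"]) (auto simp: step_path_def)
  then show ?thesis
    by (intro exI[of _ 0]) (rule tendsto_eventually)
qed

lemma gen_proc_step_path:
  assumes "\<And>\<omega>. \<omega> \<in> space M \<Longrightarrow> c \<omega> \<in> {0..1}"
    and "\<And>t. t \<in> {0..1} \<Longrightarrow> (\<lambda>\<omega>. step_path (c \<omega>) t) \<in> borel_measurable (G t)"
  shows "gen_proc M G (\<lambda>t \<omega>. step_path (c \<omega>) t)"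
proof -
  have "admissible_path (step_path (c \<omega>))" if "\<omega> \<in> space M" for \<omega>
    using step_path_admissible assms(1) that by blast
  then show ?thesis
    unfolding gen_proc_def admissible_path_def
    using assms(2) step_path_continuous_at_right step_path_left_limit by blast
qed

lemma gen_proc_const_step_path: "c \<in> {0..1} \<Longrightarrow> gen_proc M G (\<lambda>t \<omega>. step_path c t)"
  by (rule gen_proc_step_path) simp_all

lemma filtr1_type_event:
  assumes "I \<in> measurable M (count_space UNIV)"
  shows "{\<omega>\<in>space M. I \<omega> = k} \<in> sets (filtr1 M I t)"
proof -
  have "{\<omega>\<in>space M. I \<omega> = k} = I -` {k} \<inter> space M"
    by auto
  then show ?thesis
    unfolding sets_filtr1[OF assms] by (auto intro: sigma_sets.Basic)
qed

locale two_type_game = prob_space M + complete_measure M for M :: "'a measure" +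
  fixes I :: "'a \<Rightarrow> nat"
  assumes I_measurable[measurable]: "I \<in> measurable M (count_space UNIV)"
    and prob_type1: "measure M {\<omega>\<in>space M. I \<omega> = 1} = 1/2"
    and prob_type2: "measure M {\<omega>\<in>space M. I \<omega> = 2} = 1/2"
begin

lemma AE_type_1_or_2: "AE \<omega> in M. I \<omega> = 1 \<or> I \<omega> = 2"
proof -
  have "prob ({\<omega>\<in>space M. I \<omega> = 1} \<union> {\<omega>\<in>space M. I \<omega> = 2})
      = prob {\<omega>\<in>space M. I \<omega> = 1} + prob {\<omega>\<in>space M. I \<omega> = 2}"
    by (rule finite_measure_Union) auto
  then have "prob ({\<omega>\<in>space M. I \<omega> = 1} \<union> {\<omega>\<in>space M. I \<omega> = 2}) = 1"
    using prob_type1 prob_type2 by simp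
  then have "AE \<omega> in M. \<omega> \<in> {\<omega>\<in>space M. I \<omega> = 1} \<union> {\<omega>\<in>space M. I \<omega> = 2}"
    by (rule AE_prob_1)
  then show ?thesis
    by eventually_elim auto
qed

text \<open>Joint measurability of the inner double integral in \<open>\<omega>\<close> is not available, which is why the
  completeness of \<open>M\<close> is needed: the integrand is almost surely a simple function of \<open>I\<close>.\<close>

lemma N_val_eq_path_values:
  assumes x: "AE \<omega> in M. \<forall>t\<in>{0..1}. \<xi> t \<omega> = x t"
    and r1: "AE \<omega> in M. I \<omega> = 1 \<longrightarrow> (\<forall>t\<in>{0..1}. \<rho> t \<omega> = r1 t)"
    and r2: "AE \<omega> in M. I \<omega> = 2 \<longrightarrow> (\<forall>t\<in>{0..1}. \<rho> t \<omega> = r2 t)"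
  shows "N_val M I \<rho> \<xi> = (path_value r1 x 1 + path_value r2 x 2) / 2"
proof -
  define A where "A = {\<omega>\<in>space M. I \<omega> = 1}"
  define g where "g \<omega> = path_value r2 x 2 + (path_value r1 x 1 - path_value r2 x 2) * indicator A \<omega>"
    for \<omega>
  have A[measurable]: "A \<in> sets M"
    unfolding A_def by measurable
  have ae: "AE \<omega> in M. path_value (\<lambda>t. \<rho> t \<omega>) (\<lambda>t. \<xi> t \<omega>) (I \<omega>) = g \<omega>"
    using AE_type_1_or_2 AE_space x r1 r2
  proof eventually_elim
    case (elim \<omega>)
    then have "path_value (\<lambda>t. \<rho> t \<omega>) (\<lambda>t. \<xi> t \<omega>) (I \<omega>)
        = path_value (if I \<omega> = 1 then r1 else r2) x (I \<omega>)"
      by (intro path_value_cong) auto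
    with elim(1,2) show ?case
      by (auto simp: g_def A_def)
  qed
  have g: "g \<in> borel_measurable M"
    unfolding g_def by measurable
  have "N_val M I \<rho> \<xi> = integral\<^sup>L M g"
    unfolding N_val_eq_integral_path_value
    using borel_measurable_AE_eq[OF g ae] g ae by (rule integral_cong_AE)
  also have "\<dots> = path_value r2 x 2 + (path_value r1 x 1 - path_value r2 x 2) * prob A"
  proof -
    have "emeasure M A < \<infinity>"
      by (simp add: less_top[symmetric])
    then have "integrable M (indicator A :: 'a \<Rightarrow> real)"
      by (rule integrable_real_indicator[OF A])
    then show ?thesis
      unfolding g_def using A
      by (subst Bochner_Integration.integral_add) (auto simp: prob_space sets.Int_space_eq2)
  qed
  also have "\<dots> = (path_value r1 x 1 + path_value r2 x 2) / 2"
    unfolding A_def prob_type1 by (simp add: field_simps)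
  finally show ?thesis .
qed

lemma ex_informed_response_le:
  assumes \<xi>: "gen_proc M (filtr2 M) \<xi>" and "0 < e"
  shows "\<exists>\<rho>. gen_proc M (filtr1 M I) \<rho> \<and> N_val M I \<rho> \<xi> \<le> 1/2 + e"
proof -
  obtain x where x: "admissible_path x" and ax: "AE \<omega> in M. \<forall>t\<in>{0..1}. \<xi> t \<omega> = x t"
    using filtr2_gen_proc_AE_path[OF prob_space_axioms \<xi>] by blast
  obtain t where t: "t \<in> {0..1}"
    and sum: "path_value (step_path t) x 1 + path_value (step_path 1) x 2 \<le> 1 + 2 * e"
    using ex_informed_step_path_value_sum_le[OF x, of "2 * e"] \<open>0 < e\<close> by auto
  define \<rho> where "\<rho> t' \<omega> = step_path (if I \<omega> = 1 then t else 1) t'" for t' \<omega>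
  have "gen_proc M (filtr1 M I) \<rho>"
    unfolding \<rho>_def
  proof (rule gen_proc_step_path)
    fix s
    have "{\<omega>\<in>space (filtr1 M I s). I \<omega> = 1} \<in> sets (filtr1 M I s)"
      using filtr1_type_event[OF I_measurable] by (simp add: space_filtr1[OF I_measurable])
    then have "(\<lambda>\<omega>. if I \<omega> = 1 then step_path t s else step_path 1 s) \<in> borel_measurable (filtr1 M I s)"
      by (intro measurable_If) simp_all
    moreover have "(\<lambda>\<omega>. step_path (if I \<omega> = 1 then t else 1) s)
        = (\<lambda>\<omega>. if I \<omega> = 1 then step_path t s else step_path 1 s)"
      by auto
    ultimately show "(\<lambda>\<omega>. step_path (if I \<omega> = 1 then t else 1) s) \<in> borel_measurable (filtr1 M I s)"
      by simp
  qed (use t in auto)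
  moreover have "N_val M I \<rho> \<xi> = (path_value (step_path t) x 1 + path_value (step_path 1) x 2) / 2"
    by (rule N_val_eq_path_values[OF ax]) (auto simp: \<rho>_def)
  ultimately show ?thesis
    using sum by auto
qed

lemma ex_uninformed_response_ge:
  assumes \<rho>: "gen_proc M (filtr1 M I) \<rho>"
  shows "\<exists>\<xi>. gen_proc M (filtr2 M) \<xi> \<and> 23/40 \<le> N_val M I \<rho> \<xi>"
proof -
  have "prob {\<omega>\<in>space M. I \<omega> = 1} \<noteq> 0" "prob {\<omega>\<in>space M. I \<omega> = 2} \<noteq> 0"
    using prob_type1 prob_type2 by simp_all
  then obtain r1 r2
    where r1: "admissible_path r1" and a1: "AE \<omega> in M. I \<omega> = 1 \<longrightarrow> (\<forall>t\<in>{0..1}. \<rho> t \<omega> = r1 t)"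
      and r2: "admissible_path r2" and a2: "AE \<omega> in M. I \<omega> = 2 \<longrightarrow> (\<forall>t\<in>{0..1}. \<rho> t \<omega> = r2 t)"
    using filtr1_gen_proc_AE_path_on_type[OF \<rho> I_measurable] by meson
  obtain c where c: "c \<in> {0..1}" "23/20 \<le> path_value r1 (step_path c) 1 + path_value r2 (step_path c) 2"
    using ex_uninformed_step_path_value_sum_ge[OF r1 r2] by blast
  have "gen_proc M (filtr2 M) (\<lambda>t \<omega>. step_path c t)"
    by (rule gen_proc_const_step_path[OF c(1)])
  moreover have "N_val M I \<rho> (\<lambda>t \<omega>. step_path c t)
      = (path_value r1 (step_path c) 1 + path_value r2 (step_path c) 2) / 2"
    by (rule N_val_eq_path_values[OF _ a1 a2]) simp
  ultimately show ?thesis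
    using c(2) by auto
qed

lemma lower_value_le:
  "(SUP \<xi>\<in>{\<xi>. gen_proc M (filtr2 M) \<xi>}. INF \<rho>\<in>{\<rho>. gen_proc M (filtr1 M I) \<rho>}. N_val M I \<rho> \<xi>) \<le> 1/2"
proof (rule cSUP_least)
  show "{\<xi>. gen_proc M (filtr2 M) \<xi>} \<noteq> {}"
    using gen_proc_const_step_path[of 1 M "filtr2 M"] by auto
next
  fix \<xi> assume "\<xi> \<in> {\<xi>. gen_proc M (filtr2 M) \<xi>}"
  then have \<xi>: "gen_proc M (filtr2 M) \<xi>"
    by simp
  have "bdd_below ((\<lambda>\<rho>. N_val M I \<rho> \<xi>) ` {\<rho>. gen_proc M (filtr1 M I) \<rho>})"
    using N_val_bounds[OF \<xi>] by (intro bdd_belowI[where m=0]) auto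
  then have inf_le: "(INF \<rho>\<in>{\<rho>. gen_proc M (filtr1 M I) \<rho>}. N_val M I \<rho> \<xi>) \<le> N_val M I \<rho> \<xi>"
    if "gen_proc M (filtr1 M I) \<rho>" for \<rho>
    using that by (intro cINF_lower) simp_all
  show "(INF \<rho>\<in>{\<rho>. gen_proc M (filtr1 M I) \<rho>}. N_val M I \<rho> \<xi>) \<le> 1/2"
  proof (rule field_le_epsilon)
    fix e :: real assume "0 < e"
    then obtain \<rho> where "gen_proc M (filtr1 M I) \<rho>" "N_val M I \<rho> \<xi> \<le> 1/2 + e"
      using ex_informed_response_le[OF \<xi>] by blast
    then show "(INF \<rho>\<in>{\<rho>. gen_proc M (filtr1 M I) \<rho>}. N_val M I \<rho> \<xi>) \<le> 1/2 + e"
      using inf_le by fastforce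
  qed
qed

lemma upper_value_ge:
  "23/40 \<le> (INF \<rho>\<in>{\<rho>. gen_proc M (filtr1 M I) \<rho>}. SUP \<xi>\<in>{\<xi>. gen_proc M (filtr2 M) \<xi>}. N_val M I \<rho> \<xi>)"
proof (rule cINF_greatest)
  show "{\<rho>. gen_proc M (filtr1 M I) \<rho>} \<noteq> {}"
    using gen_proc_const_step_path[of 1 M "filtr1 M I"] by auto
next
  fix \<rho> assume "\<rho> \<in> {\<rho>. gen_proc M (filtr1 M I) \<rho>}"
  then obtain \<xi> where \<xi>: "gen_proc M (filtr2 M) \<xi>" and ge: "23/40 \<le> N_val M I \<rho> \<xi>"
    using ex_uninformed_response_ge by blast
  have "N_val M I \<rho> \<xi>' \<le> 2" if "gen_proc M (filtr2 M) \<xi>'" for \<xi>'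
    using N_val_bounds[OF that] by simp
  then have "bdd_above ((\<lambda>\<xi>. N_val M I \<rho> \<xi>) ` {\<xi>. gen_proc M (filtr2 M) \<xi>})"
    by (intro bdd_aboveI[where M=2]) auto
  then have "N_val M I \<rho> \<xi> \<le> (SUP \<xi>\<in>{\<xi>. gen_proc M (filtr2 M) \<xi>}. N_val M I \<rho> \<xi>)"
    using \<xi> by (intro cSUP_upper) simp_all
  with ge show "23/40 \<le> (SUP \<xi>\<in>{\<xi>. gen_proc M (filtr2 M) \<xi>}. N_val M I \<rho> \<xi>)"
    by linarith
qed

end

theorem mainTheorem19:
  fixes M :: "'a measure" and I :: "'a \<Rightarrow> nat"
  assumes "prob_space M"
    and "complete_measure M"
    and "I \<in> measurable M (count_space UNIV)"
    and "measure M {\<omega>\<in>space M. I \<omega> = 1} = 1/2"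
    and "measure M {\<omega>\<in>space M. I \<omega> = 2} = 1/2"
  shows "(SUP \<xi>\<in>{\<xi>. gen_proc M (filtr2 M) \<xi>}. INF \<rho>\<in>{\<rho>. gen_proc M (filtr1 M I) \<rho>}. N_val M I \<rho> \<xi>) \<le> 1/2
       \<and> 1/2 < (INF \<rho>\<in>{\<rho>. gen_proc M (filtr1 M I) \<rho>}. SUP \<xi>\<in>{\<xi>. gen_proc M (filtr2 M) \<xi>}. N_val M I \<rho> \<xi>)"
proof -
  interpret two_type_game M I
    by (intro two_type_game.intro two_type_game_axioms.intro assms)
  show ?thesis
    using lower_value_le upper_value_ge by linarith
qed

end
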